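(* For integers $0\le m<n$, the probability that the boundary Markov chain started at $M_0=n$ ever hits $m$ is \[ 1-\frac{(n)_{m+1}}{(n+1/2)_{m+1}} . \] In particular the probability of ever hitting $0$ from $n$ is $\frac{1}{2n+1}$, so the chain is transient.
   Context: The boundary Markov chain is the Markov chain $(M_n)_{n\ge0}$ on $\{0,1,2,\dots\}$ with $M_{n+1}=M_n+X_n$. Given $M_n=m$, its step $X_n$ has the law \[ \mathbb P(X_n=1\mid M_n=m)=\frac{2m+3}{3m+3}. \] For $1\le k\le m$, \[ \mathbb P(X_n=-k\mid M_n=m)=\frac{2(2k-2)!}{(k-1)!(k+1)!}\cdot\frac{m!^2(2m-2k+1)!}{(m-k)!^2(2m+1)!}. \] The descending factorial is $(x)_k=x(x-1)\cdots(x-k+1)=\Gamma(x+1)/\Gamma(x-k+1)$. *)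

theory Defs
  imports "HOL-Probability.Probability"
begin

text \<open>Descending factorial (x)_k = x(x-1)...(x-k+1).\<close>
definition dfact :: "real \<Rightarrow> nat \<Rightarrow> real" where
  "dfact x k = (\<Prod>i<k. (x - real i))"

text \<open>Probability of a downward jump of size k from state m (1 <= k <= m).\<close>
definition down_prob :: "nat \<Rightarrow> nat \<Rightarrow> real" where
  "down_prob m k =
     (2 * fact (2*k - 2) / (fact (k - 1) * fact (k + 1))) *
     (fact m ^ 2 * fact (2*m - 2*k + 1) / (fact (m - k) ^ 2 * fact (2*m + 1)))"

definition trans_weight :: "nat \<Rightarrow> nat \<Rightarrow> real" where
  "trans_weight m y =
     (if y = m + 1 then (2 * real m + 3) / (3 * real m + 3)
      else if y < m then down_prob m (m - y)
      else 0)"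

definition K :: "nat \<Rightarrow> nat pmf" where
  "K m = embed_pmf (trans_weight m)"

fun traj :: "nat \<Rightarrow> nat \<Rightarrow> nat list pmf" where
  "traj 0 x = return_pmf [x]"
| "traj (Suc N) x = bind_pmf (K x) (\<lambda>y. map_pmf (Cons x) (traj N y))"

text \<open>Probability of hitting m from x: supremum over N of hitting within N steps
  (the events are increasing in N, so this is the probability of ever hitting m).\<close>
definition hit_prob :: "nat \<Rightarrow> nat \<Rightarrow> real" where
  "hit_prob x m = (SUP N. measure_pmf.prob (traj N x) {xs. m \<in> set xs})"

definition return_prob :: "nat \<Rightarrow> real" where
  "return_prob x = (SUP N. measure_pmf.prob (traj N x) {xs. x \<in> set (tl xs)})"

end

theory Submission
  imports Defs
begin

(*
  Write h j y = (y)_j / (y + 1/2)_j.  Since P(x, x - k) h j (x - k) = h j x P(x - j, x - j - k),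
  harmonicity of h j at x \<ge> j reduces to the total probability of a down jump from x - j, a
  hypergeometric sum that telescopes.  The function h (m + 1) vanishes on {0..m} and tends to 1,
  so 1 - h (m + 1) is harmonic off m and equals 1 at m; by induction on the horizon it bounds
  the hitting probabilities of m from above.  Conversely, the difference of the two functions is
  harmonic off m, vanishes at m and has limsup at most 0; since the chain moves up only by single
  steps, a positive maximum of it would propagate to infinity.  Returning to x requires, after a
  possible first step up to x + 1, hitting x from x + 1, which happens with probability
  1 - h (x + 1) (x + 1) < 1.
*)

section \<open>A maximum principle\<close>

(* A positive maximum of d on an initial segment would be carried upwards by the steps
   x \<rightarrow> Suc x, contradicting the limsup. *)
lemma harmonic_nonpos_if_limsup_nonpos:
  fixes P :: "nat \<Rightarrow> nat \<Rightarrow> real" and d :: "nat \<Rightarrow> real"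
  assumes P_nonneg: "\<And>x z. 0 \<le> P x z"
    and P_sum: "\<And>x. (\<Sum>z\<le>Suc x. P x z) = 1"
    and P_up: "\<And>x. 0 < P x (Suc x)"
    and harmonic: "\<And>x. x \<notin> A \<Longrightarrow> d x = (\<Sum>z\<le>Suc x. P x z * d z)"
    and boundary: "\<And>x. x \<in> A \<Longrightarrow> d x \<le> 0"
    and limsup: "\<And>e. 0 < e \<Longrightarrow> eventually (\<lambda>y. d y < e) sequentially"
  shows "d y \<le> 0"
proof (rule ccontr)
  assume "\<not> d y \<le> 0"
  then obtain X where X: "\<And>z. X \<le> z \<Longrightarrow> d z < d y"
    using limsup[of "d y"] by (auto simp: eventually_sequentially)
  define s where "s = Max (d ` {..X})"
  have "y \<le> X"
    using X[of y] by (meson less_irrefl nat_le_linear)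
  then have "d y \<le> s"
    unfolding s_def by (intro Max_ge) auto
  have d_le_s: "d z \<le> s" for z
  proof (cases "z \<le> X")
    case True
    then show ?thesis
      unfolding s_def by (intro Max_ge) auto
  qed (use X[of z] \<open>d y \<le> s\<close> in simp)
  have "s \<in> d ` {..X}"
    unfolding s_def by (intro Max_in) auto
  then obtain x0 where "d x0 = s"
    by auto
  have max_Suc: "d (Suc x) = s" if "d x = s" for x
  proof -
    have "x \<notin> A"
      using that boundary \<open>d y \<le> s\<close> \<open>\<not> d y \<le> 0\<close> by force
    then have "(\<Sum>z\<le>Suc x. P x z * (s - d z)) = 0"
      using harmonic[of x] P_sum[of x] that
      by (simp add: right_diff_distrib sum_subtractf sum_distrib_right[symmetric])
    moreover have "\<forall>z\<in>{..Suc x}. 0 \<le> P x z * (s - d z)"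
      using P_nonneg d_le_s by simp
    ultimately have "P x (Suc x) * (s - d (Suc x)) = 0"
      using sum_nonneg_eq_0_iff[of "{..Suc x}" "\<lambda>z. P x z * (s - d z)"] by simp
    then show ?thesis
      using P_up[of x] by simp
  qed
  have "d (x0 + k) = s" for k
    by (induction k) (simp_all add: \<open>d x0 = s\<close> max_Suc)
  then show False
    using X[of "x0 + X"] \<open>d y \<le> s\<close> by simp
qed

section \<open>Descending factorials\<close>

lemma dfact_0 [simp]: "dfact x 0 = 1"
  by (simp add: dfact_def)

lemma dfact_Suc: "dfact x (Suc k) = dfact x k * (x - real k)"
  by (simp add: dfact_def)

lemma dfact_add: "dfact x (k + j) = dfact x k * dfact (x - real k) j"
  by (induction j) (simp_all add: dfact_Suc algebra_simps)

lemma dfact_shift: "dfact (x + 1) j * (x + 1 - real j) = (x + 1) * dfact x j"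
  using dfact_add[of "x + 1" 1 j] by (simp add: dfact_Suc[symmetric] dfact_def)

lemma odd_real_neq_even_real: "2 * real a + 1 \<noteq> 2 * real b"
proof
  assume "2 * real a + 1 = 2 * real b"
  then have "2 * a + 1 = 2 * b"
    by linarith
  then show False
    by presburger
qed

lemma dfact_of_nat_eq_0: "y < k \<Longrightarrow> dfact (real y) k = 0"
  unfolding dfact_def by (rule prod_zero) auto

lemma dfact_half_integer_nonzero:
  assumes "x \<in> \<int>"
  shows "dfact (x + 1/2) k \<noteq> 0"
proof -
  obtain a where a: "x = of_int a"
    using assms by (auto elim: Ints_cases)
  have "x + 1/2 - real i \<noteq> 0" for i
  proof
    assume "x + 1/2 - real i = 0"
    then have "real_of_int (2 * a + 1) = real_of_int (2 * int i)"
      by (simp add: a)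
    then have "2 * a + 1 = 2 * int i"
      by (simp only: of_int_eq_iff)
    then show False
      by presburger
  qed
  then show ?thesis
    unfolding dfact_def by simp
qed

lemma fact_eq_fact_diff_mult_dfact:
  "k \<le> n \<Longrightarrow> (fact n :: real) = fact (n - k) * dfact (real n) k"
proof (induction k)
  case (Suc k)
  then have "(fact (n - k) :: real) = real (n - k) * fact (n - Suc k)"
    by (metis Suc_diff_Suc Suc_le_lessD fact_Suc of_nat_Suc)
  with Suc show ?case
    by (simp add: dfact_Suc of_nat_diff)
qed simp

lemma fact_odd_eq_dfact:
  "k \<le> n \<Longrightarrow> (fact (2*n + 1) :: real) =
     fact (2*n + 1 - 2*k) * 4^k * dfact (real n + 1/2) k * dfact (real n) k"
proof (induction k)
  case (Suc k)
  have "2*n + 1 - 2*k = Suc (Suc (2*n + 1 - 2 * Suc k))"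
    using Suc.prems by simp
  then have "(fact (2*n + 1 - 2*k) :: real) =
      real (2*n + 1 - 2*k) * real (2*n - 2*k) * fact (2*n + 1 - 2 * Suc k)"
    using Suc.prems by (simp add: algebra_simps)
  also have "real (2*n + 1 - 2*k) = 2 * real n + 1 - 2 * real k"
    using Suc.prems by (subst of_nat_diff) auto
  also have "real (2*n - 2*k) = 2 * real n - 2 * real k"
    using Suc.prems by (subst of_nat_diff) auto
  finally have F: "(fact (2*n + 1 - 2*k) :: real) =
      4 * (real n + 1/2 - real k) * (real n - real k) * fact (2*n + 1 - 2 * Suc k)"
    by (simp add: algebra_simps)
  show ?case
    unfolding Suc.IH[OF Suc_leD[OF Suc.prems]] F dfact_Suc by (simp add: algebra_simps)
qed simp

section \<open>The jump probabilities\<close>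

definition jump_coeff :: "nat \<Rightarrow> real" where
  "jump_coeff k = 2 * fact (2*k - 2) / (fact (k - 1) * fact (k + 1))"

definition down_ratio :: "nat \<Rightarrow> nat \<Rightarrow> real" where
  "down_ratio M k = dfact (real M) k / (4^k * dfact (real M + 1/2) k)"

lemma down_prob_eq:
  assumes "1 \<le> k" "k \<le> M"
  shows "down_prob M k = jump_coeff k * down_ratio M k"
proof -
  have "2*M - 2*k + 1 = 2*M + 1 - 2*k"
    using assms by simp
  moreover have "dfact (real M + 1/2) k \<noteq> 0" "dfact (real M) k \<noteq> 0"
    using dfact_half_integer_nonzero[OF Ints_of_nat] fact_eq_fact_diff_mult_dfact[OF assms(2)]
    by auto
  ultimately show ?thesis
    unfolding down_prob_def jump_coeff_def down_ratio_def
      fact_eq_fact_diff_mult_dfact[OF assms(2)] fact_odd_eq_dfact[OF assms(2)]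
    by (simp add: field_simps power2_eq_square)
qed

lemma down_ratio_eq_0: "M < k \<Longrightarrow> down_ratio M k = 0"
  by (simp add: down_ratio_def dfact_of_nat_eq_0)

lemma jump_coeff_Suc:
  assumes "1 \<le> k"
  shows "jump_coeff (Suc k) = jump_coeff k * 2 * (2 * real k - 1) / (real k + 2)"
proof -
  obtain j where k: "k = Suc j"
    using assms by (cases k) auto
  have "2 * Suc (Suc j) - 2 = Suc (Suc (2*j))" "2 * Suc j - 2 = 2*j"
    by simp_all
  moreover have "(fact (Suc (Suc (2*j))) :: real) = (2 * real j + 2) * (2 * real j + 1) * fact (2*j)"
    "(fact (Suc (Suc j) + 1) :: real) = (real j + 3) * (real j + 2) * (real j + 1) * fact j"
    "(fact (Suc j + 1) :: real) = (real j + 2) * (real j + 1) * fact j"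
    by (simp_all add: algebra_simps)
  ultimately show ?thesis
    unfolding k jump_coeff_def by (simp add: divide_simps)
qed

lemma down_ratio_Suc:
  "down_ratio M (Suc k) = down_ratio M k * (real M - real k) / (2 * (2 * real M + 1 - 2 * real k))"
proof -
  have "2 * real M + 1 - 2 * real k \<noteq> 0"
    using odd_real_neq_even_real[of M k] by simp
  then show ?thesis
    using dfact_half_integer_nonzero[OF Ints_of_nat, of M k]
    by (simp add: down_ratio_def dfact_Suc divide_simps)
qed

(* The closed form of the partial sums was found by Gosper's algorithm. *)
lemma sum_jump_coeff_down_ratio_partial:
  assumes "1 \<le> L" "L \<le> M"
  shows "(\<Sum>k=1..L. jump_coeff k * down_ratio M k) = real M / (3 * (real M + 1))
           - (real M - real L) * (2 * real L - 1) * jump_coeff L * down_ratio M L / (3 * (real M + 1))"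
  using assms
proof (induction L rule: dec_induct)
  case base
  have "jump_coeff 1 * down_ratio M 1 = real M / (4 * real M + 2)"
    by (simp add: jump_coeff_def down_ratio_def dfact_def)
  then show ?case
    by (simp add: divide_simps) (simp add: algebra_simps)
next
  case (step L)
  have "2 * real M + 1 - 2 * real L \<noteq> 0"
    using odd_real_neq_even_real[of M L] by simp
  then have "jump_coeff (Suc L) * down_ratio M (Suc L) = jump_coeff L * down_ratio M L
      * ((2 * real L - 1) * (real M - real L)) / ((real L + 2) * (2 * real M + 1 - 2 * real L))"
    unfolding jump_coeff_Suc[OF step.hyps(1)] down_ratio_Suc
    by (simp add: divide_simps)
  with step show ?case
    by (simp add: divide_simps) (simp add: algebra_simps)
qed

lemma sum_jump_coeff_down_ratio:
  assumes "M \<le> x"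
  shows "(\<Sum>k=1..x. jump_coeff k * down_ratio M k) = real M / (3 * (real M + 1))"
proof (cases "M = 0")
  case False
  have "(\<Sum>k=1..x. jump_coeff k * down_ratio M k) = (\<Sum>k=1..M. jump_coeff k * down_ratio M k)"
    by (rule sum.mono_neutral_right) (use assms down_ratio_eq_0 in auto)
  with False show ?thesis
    using sum_jump_coeff_down_ratio_partial[of M M] by simp
qed (simp add: down_ratio_eq_0)

section \<open>Harmonic functions of the chain\<close>

definition dfact_ratio :: "nat \<Rightarrow> nat \<Rightarrow> real" where
  "dfact_ratio j y = dfact (real y) j / dfact (real y + 1/2) j"

lemma dfact_ratio_0 [simp]: "dfact_ratio 0 y = 1"
  by (simp add: dfact_ratio_def)

lemma dfact_ratio_eq_0: "y < j \<Longrightarrow> dfact_ratio j y = 0"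
  by (simp add: dfact_ratio_def dfact_of_nat_eq_0)

lemma dfact_ratio_eq_prod: "dfact_ratio j y = (\<Prod>i<j. (real y - real i) / (real y + 1/2 - real i))"
  by (simp add: dfact_ratio_def dfact_def prod_dividef)

lemma dfact_ratio_pos: "j \<le> y \<Longrightarrow> 0 < dfact_ratio j y"
  unfolding dfact_ratio_eq_prod by (intro prod_pos) (auto simp: divide_simps)

lemma dfact_ratio_le_1: "dfact_ratio j y \<le> 1"
proof (cases "j \<le> y")
  case True
  then show ?thesis
    unfolding dfact_ratio_eq_prod by (intro prod_le_1) (auto simp: divide_simps)
qed (simp add: dfact_ratio_eq_0)

lemma half_shift_quotient_tendsto_1: "(\<lambda>y. (real y - c) / (real y + 1/2 - c)) \<longlonglongrightarrow> 1"
proof -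
  have "(\<lambda>y. (1 - c / real y) / (1 + (1/2 - c) / real y)) \<longlonglongrightarrow> (1 - 0) / (1 + 0)"
    by (intro tendsto_intros) simp
  moreover have "eventually (\<lambda>y. (1 - c / real y) / (1 + (1/2 - c) / real y)
      = (real y - c) / (real y + 1/2 - c)) sequentially"
    using eventually_gt_at_top[of 0]
  proof eventually_elim
    case (elim y)
    then have "1 - c / real y = (real y - c) / real y"
      "1 + (1/2 - c) / real y = (real y + 1/2 - c) / real y"
      by (simp_all add: field_simps)
    with elim show ?case
      by simp
  qed
  ultimately show ?thesis
    by (simp add: tendsto_cong)
qed

lemma dfact_ratio_tendsto_1: "dfact_ratio j \<longlonglongrightarrow> 1"
proof -
  have "(\<lambda>y. \<Prod>i<j. (real y - real i) / (real y + 1/2 - real i)) \<longlonglongrightarrow> (\<Prod>i<j. 1)"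
    by (intro tendsto_prod half_shift_quotient_tendsto_1)
  then show ?thesis
    by (simp add: dfact_ratio_eq_prod[abs_def])
qed

lemma dfact_swap: "dfact x k * dfact (x - real k) j = dfact x j * dfact (x - real j) k"
  using dfact_add[of x k j] dfact_add[of x j k] by (simp add: add.commute)

lemma down_ratio_mult_dfact_ratio:
  assumes "k \<le> x" "j \<le> x"
  shows "down_ratio x k * dfact_ratio j (x - k) = dfact_ratio j x * down_ratio (x - j) k"
proof -
  have diff: "real (x - k) = real x - real k" "real (x - j) = real x - real j"
    "real x - real k + 1/2 = real x + 1/2 - real k" "real x - real j + 1/2 = real x + 1/2 - real j"
    using assms by (simp_all add: of_nat_diff)
  have "down_ratio x k * dfact_ratio j (x - k) = (dfact (real x) k * dfact (real x - real k) j)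
      / (4^k * (dfact (real x + 1/2) k * dfact (real x + 1/2 - real k) j))"
    unfolding down_ratio_def dfact_ratio_def diff by simp
  also have "\<dots> = (dfact (real x) j * dfact (real x - real j) k)
      / (4^k * (dfact (real x + 1/2) j * dfact (real x + 1/2 - real j) k))"
    by (simp only: dfact_swap)
  also have "\<dots> = dfact_ratio j x * down_ratio (x - j) k"
    unfolding down_ratio_def dfact_ratio_def diff by simp
  finally show ?thesis .
qed

lemma sum_trans_weight_mult:
  "(\<Sum>y\<le>Suc x. trans_weight x y * g y) =
     (2 * real x + 3) / (3 * real x + 3) * g (Suc x) + (\<Sum>k=1..x. down_prob x k * g (x - k))"
proof -
  have "(\<Sum>y<x. trans_weight x y * g y) = (\<Sum>y<x. down_prob x (x - y) * g y)"
    by (rule sum.cong) (auto simp: trans_weight_def)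
  also have "\<dots> = (\<Sum>k=1..x. down_prob x k * g (x - k))"
    by (rule sum.reindex_bij_witness[where i="\<lambda>k. x - k" and j="\<lambda>y. x - y"]) auto
  finally show ?thesis
    by (simp add: atMost_Suc lessThan_Suc_atMost[symmetric] trans_weight_def)
qed

lemma dfact_ratio_Suc:
  assumes "j \<le> x"
  shows "dfact_ratio j (Suc x) = dfact_ratio j x
    * ((real x + 1) * (real x + 3/2 - real j)) / ((real x + 1 - real j) * (real x + 3/2))"
proof -
  define A A' B B' where "A = dfact (real x) j" "A' = dfact (real x + 1) j"
    "B = dfact (real x + 1/2) j" "B' = dfact (real x + 1/2 + 1) j"
  have A': "A' = (real x + 1) * A / (real x + 1 - real j)"
    unfolding A_A'_B_B'_def by (rule eq_divide_imp[OF _ dfact_shift]) (use assms in simp)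
  have B': "B' = (real x + 1/2 + 1) * B / (real x + 1/2 + 1 - real j)"
    unfolding A_A'_B_B'_def by (rule eq_divide_imp[OF _ dfact_shift]) (use assms in simp)
  have "dfact_ratio j (Suc x) = A' / B'"
    unfolding dfact_ratio_def A_A'_B_B'_def by (simp add: add_ac)
  also have "\<dots> = A / B * ((real x + 1) * (real x + 1/2 + 1 - real j))
      / ((real x + 1 - real j) * (real x + 1/2 + 1))"
    unfolding A' B' by (simp add: divide_divide_times_eq times_divide_times_eq ac_simps)
  also have "\<dots> = dfact_ratio j x
      * ((real x + 1) * (real x + 3/2 - real j)) / ((real x + 1 - real j) * (real x + 3/2))"
    by (simp add: dfact_ratio_def A_A'_B_B'_def add_ac)
  finally show ?thesis .
qed

lemma dfact_ratio_harmonic: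
  assumes "Suc x \<noteq> j"
  shows "(\<Sum>y\<le>Suc x. trans_weight x y * dfact_ratio j y) = dfact_ratio j x"
proof (cases "j \<le> x")
  case True
  have down: "(\<Sum>k=1..x. down_prob x k * dfact_ratio j (x - k))
      = dfact_ratio j x * (real (x - j) / (3 * (real (x - j) + 1)))"
  proof -
    have "(\<Sum>k=1..x. down_prob x k * dfact_ratio j (x - k))
        = dfact_ratio j x * (\<Sum>k=1..x. jump_coeff k * down_ratio (x - j) k)"
      unfolding sum_distrib_left
      by (rule sum.cong) (use True down_prob_eq down_ratio_mult_dfact_ratio in auto)
    with sum_jump_coeff_down_ratio[of "x - j" x] show ?thesis
      by simp
  qed
  have "real x + 1 - real j \<noteq> 0" "real (x - j) = real x - real j"
    using True by (simp_all add: of_nat_diff)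
  then show ?thesis
    unfolding sum_trans_weight_mult down dfact_ratio_Suc[OF True]
    by (simp add: divide_simps) (simp add: algebra_simps)
next
  case False
  with assms show ?thesis
    by (simp add: dfact_ratio_eq_0)
qed

lemma trans_weight_nonneg: "0 \<le> trans_weight x y"
  by (simp add: trans_weight_def down_prob_def)

lemma trans_weight_eq_0: "Suc x < y \<Longrightarrow> trans_weight x y = 0"
  by (simp add: trans_weight_def)

lemma trans_weight_Suc_pos: "0 < trans_weight x (Suc x)"
  by (simp add: trans_weight_def)

lemma sum_trans_weight: "(\<Sum>y\<le>Suc x. trans_weight x y) = 1"
  using dfact_ratio_harmonic[of x 0] by simp

section \<open>Hitting probabilities\<close>

lemma pmf_K: "pmf (K x) y = trans_weight x y"
proof -
  have "(\<integral>\<^sup>+y. ennreal (trans_weight x y) \<partial>count_space UNIV)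
      = (\<Sum>y\<in>{..Suc x}. ennreal (trans_weight x y))"
    by (rule nn_integral_count_space') (auto simp: trans_weight_eq_0)
  also have "\<dots> = ennreal (\<Sum>y\<in>{..Suc x}. trans_weight x y)"
    by (rule sum_ennreal) (rule trans_weight_nonneg)
  also have "\<dots> = 1"
    by (simp only: sum_trans_weight ennreal_1)
  finally show ?thesis
    unfolding K_def by (rule pmf_embed_pmf[OF trans_weight_nonneg])
qed

lemma set_pmf_K: "set_pmf (K x) \<subseteq> {..Suc x}"
proof
  fix y
  assume "y \<in> set_pmf (K x)"
  then have "trans_weight x y \<noteq> 0"
    by (simp add: set_pmf_iff pmf_K)
  then show "y \<in> {..Suc x}"
    using trans_weight_eq_0[of x y] by (cases "Suc x < y") auto
qed

lemma measure_bind_K: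
  "measure_pmf.prob (bind_pmf (K x) F) A = (\<Sum>y\<le>Suc x. trans_weight x y * measure_pmf.prob (F y) A)"
proof -
  have "emeasure (measure_pmf (bind_pmf (K x) F)) A
      = (\<integral>\<^sup>+y. emeasure (F y) A \<partial>measure_pmf (K x))"
    by simp
  also have "\<dots> = (\<Sum>y\<le>Suc x. emeasure (F y) A * pmf (K x) y)"
    by (rule nn_integral_measure_pmf_support) (use set_pmf_K in auto)
  also have "\<dots> = (\<Sum>y\<le>Suc x. ennreal (trans_weight x y * measure_pmf.prob (F y) A))"
    by (rule sum.cong) (auto simp: pmf_K measure_pmf.emeasure_eq_measure ennreal_mult''
        trans_weight_nonneg mult.commute)
  also have "\<dots> = ennreal (\<Sum>y\<le>Suc x. trans_weight x y * measure_pmf.prob (F y) A)"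
    by (rule sum_ennreal) (simp add: trans_weight_nonneg)
  finally have "ennreal (measure_pmf.prob (bind_pmf (K x) F) A)
      = ennreal (\<Sum>y\<le>Suc x. trans_weight x y * measure_pmf.prob (F y) A)"
    by (simp only: measure_pmf.emeasure_eq_measure)
  moreover have "0 \<le> (\<Sum>y\<le>Suc x. trans_weight x y * measure_pmf.prob (F y) A)"
    by (intro sum_nonneg mult_nonneg_nonneg trans_weight_nonneg) auto
  ultimately show ?thesis
    by (subst (asm) ennreal_inj) auto
qed

definition hit_within :: "nat \<Rightarrow> nat \<Rightarrow> nat \<Rightarrow> real" where
  "hit_within N x m = measure_pmf.prob (traj N x) {xs. m \<in> set xs}"

lemma hit_within_0: "hit_within 0 x m = (if x = m then 1 else 0)"
  by (simp add: hit_within_def)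

lemma hit_within_Suc:
  "hit_within (Suc N) x m = (if x = m then 1 else (\<Sum>y\<le>Suc x. trans_weight x y * hit_within N y m))"
proof (cases "x = m")
  case True
  then show ?thesis
    unfolding hit_within_def traj.simps measure_bind_K measure_map_pmf
    using sum_trans_weight[of x] by simp
next
  case False
  then show ?thesis
    unfolding hit_within_def traj.simps measure_bind_K measure_map_pmf
    by (auto simp: vimage_def)
qed

lemma hit_within_nonneg: "0 \<le> hit_within N x m"
  by (simp add: hit_within_def)

lemma hit_within_le_1: "hit_within N x m \<le> 1"
  by (simp add: hit_within_def)

lemma hit_within_mono: "hit_within N y m \<le> hit_within (Suc N) y m"
proof (induction N arbitrary: y)
  case 0
  show ?case
    using hit_within_nonneg[of "Suc 0" y m] by (cases "y = m") (simp_all add: hit_within_0 hit_within_Suc)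
next
  case (Suc N)
  have "(\<Sum>z\<le>Suc y. trans_weight y z * hit_within N z m)
      \<le> (\<Sum>z\<le>Suc y. trans_weight y z * hit_within (Suc N) z m)"
    by (intro sum_mono mult_left_mono Suc trans_weight_nonneg)
  then show ?case
    by (simp only: hit_within_Suc[of "Suc N"] hit_within_Suc[of N] split: if_split) simp
qed

lemma hit_within_le_dfact_ratio: "hit_within N y m \<le> 1 - dfact_ratio (Suc m) y"
proof (induction N arbitrary: y)
  case 0
  then show ?case
    using dfact_ratio_le_1 by (simp add: hit_within_0 dfact_ratio_eq_0)
next
  case (Suc N)
  show ?case
  proof (cases "y = m")
    case False
    have "(\<Sum>z\<le>Suc y. trans_weight y z * hit_within N z m)
        \<le> (\<Sum>z\<le>Suc y. trans_weight y z * (1 - dfact_ratio (Suc m) z))"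
      by (intro sum_mono mult_left_mono Suc trans_weight_nonneg)
    also have "\<dots> = 1 - dfact_ratio (Suc m) y"
      using False sum_trans_weight[of y] dfact_ratio_harmonic[of y "Suc m"]
      by (simp add: right_diff_distrib sum_subtractf)
    finally show ?thesis
      using False by (simp add: hit_within_Suc)
  qed (simp add: hit_within_Suc dfact_ratio_eq_0)
qed

lemma hit_within_tendsto: "(\<lambda>N. hit_within N y m) \<longlonglongrightarrow> hit_prob y m"
proof -
  have "(\<lambda>N. hit_within N y m) \<longlonglongrightarrow> (SUP N. hit_within N y m)"
    by (intro LIMSEQ_incseq_SUP bdd_aboveI2[where M=1] hit_within_le_1)
      (simp add: incseq_Suc_iff hit_within_mono)
  then show ?thesis
    by (simp add: hit_prob_def hit_within_def)
qed

lemma hit_prob_self: "hit_prob m m = 1"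
proof -
  have "hit_within N m m = 1" for N
    by (cases N) (simp_all add: hit_within_0 hit_within_Suc)
  then show ?thesis
    using LIMSEQ_unique[OF hit_within_tendsto[of m m], of 1] by simp
qed

lemma hit_prob_nonneg: "0 \<le> hit_prob y m"
  by (rule LIMSEQ_le_const[OF hit_within_tendsto]) (simp add: hit_within_nonneg)

lemma hit_prob_le_dfact_ratio: "hit_prob y m \<le> 1 - dfact_ratio (Suc m) y"
  by (rule LIMSEQ_le_const2[OF hit_within_tendsto]) (simp add: hit_within_le_dfact_ratio)

lemma hit_prob_harmonic:
  assumes "y \<noteq> m"
  shows "hit_prob y m = (\<Sum>z\<le>Suc y. trans_weight y z * hit_prob z m)"
proof -
  have "(\<lambda>N. hit_within (Suc N) y m) \<longlonglongrightarrow> (\<Sum>z\<le>Suc y. trans_weight y z * hit_prob z m)"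
    unfolding hit_within_Suc using assms
    by (simp only: if_False) (intro tendsto_intros hit_within_tendsto)
  then show ?thesis
    by (rule LIMSEQ_unique[OF LIMSEQ_Suc[OF hit_within_tendsto]])
qed

lemma hit_prob_eq: "hit_prob n m = 1 - dfact_ratio (Suc m) n"
proof -
  define d where "d y = 1 - hit_prob y m - dfact_ratio (Suc m) y" for y
  have "d n \<le> 0"
  proof (rule harmonic_nonpos_if_limsup_nonpos[where P = trans_weight and A = "{m}"])
    show "d x = (\<Sum>z\<le>Suc x. trans_weight x z * d z)" if "x \<notin> {m}" for x
    proof -
      have "x \<noteq> m" "Suc x \<noteq> Suc m"
        using that by simp_all
      have "(\<Sum>z\<le>Suc x. trans_weight x z * d z) = (\<Sum>z\<le>Suc x. trans_weight x z)
          - (\<Sum>z\<le>Suc x. trans_weight x z * hit_prob z m)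
          - (\<Sum>z\<le>Suc x. trans_weight x z * dfact_ratio (Suc m) z)"
        by (simp add: d_def right_diff_distrib sum_subtractf)
      also have "\<dots> = d x"
        unfolding d_def sum_trans_weight hit_prob_harmonic[OF \<open>x \<noteq> m\<close>, symmetric]
          dfact_ratio_harmonic[OF \<open>Suc x \<noteq> Suc m\<close>] ..
      finally show ?thesis
        by (rule sym)
    qed
    show "d x \<le> 0" if "x \<in> {m}" for x
      using that by (simp add: d_def hit_prob_self dfact_ratio_eq_0)
    show "eventually (\<lambda>y. d y < e) sequentially" if "0 < e" for e
    proof -
      have "d y < e" if "dist (dfact_ratio (Suc m) y) 1 < e" for y
        using that hit_prob_nonneg[of y m] by (simp add: d_def dist_real_def abs_less_iff)
      then show ?thesis
        using tendstoD[OF dfact_ratio_tendsto_1[of "Suc m"] \<open>0 < e\<close>]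
        by (rule eventually_mono[rotated])
    qed
  qed (rule trans_weight_nonneg sum_trans_weight trans_weight_Suc_pos)+
  then show ?thesis
    using hit_prob_le_dfact_ratio[of n m] by (simp add: d_def)
qed

lemma return_prob_less_1: "return_prob x < 1"
proof -
  define S where "S = (\<Sum>y\<le>Suc x. trans_weight x y * (1 - dfact_ratio (Suc x) y))"
  have "S = 1 - trans_weight x (Suc x) * dfact_ratio (Suc x) (Suc x)"
    using sum_trans_weight[of x]
    by (simp add: S_def right_diff_distrib sum_subtractf dfact_ratio_eq_0)
  then have "S < 1"
    using trans_weight_Suc_pos[of x] dfact_ratio_pos[of "Suc x" "Suc x"] by simp
  have return_within_le: "measure_pmf.prob (traj N x) {xs. x \<in> set (tl xs)} \<le> S" for N
  proof (cases N)
    case 0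
    then show ?thesis
      unfolding S_def
      by (simp add: sum_nonneg trans_weight_nonneg dfact_ratio_le_1)
  next
    case (Suc N')
    have "(\<Sum>y\<le>Suc x. trans_weight x y * hit_within N' y x) \<le> S"
      unfolding S_def
      by (intro sum_mono mult_left_mono hit_within_le_dfact_ratio trans_weight_nonneg)
    then show ?thesis
      unfolding Suc traj.simps measure_bind_K measure_map_pmf hit_within_def
      by (simp add: vimage_def)
  qed
  have "return_prob x \<le> S"
    unfolding return_prob_def by (rule cSUP_least) (use return_within_le in auto)
  with \<open>S < 1\<close> show ?thesis
    by simp
qed

theorem claim3p3:
  fixes m n :: nat
  assumes "m < n"
  shows "hit_prob n m = 1 - dfact (real n) (m + 1) / dfact (real n + 1/2) (m + 1)
         \<and> hit_prob n 0 = 1 / (2 * real n + 1)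
         \<and> (\<forall>x. return_prob x < 1)"
proof (intro conjI allI)
  show "hit_prob n m = 1 - dfact (real n) (m + 1) / dfact (real n + 1/2) (m + 1)"
    using hit_prob_eq[of n m] by (simp add: dfact_ratio_def)
  have "hit_prob n 0 = 1 - real n / (real n + 1/2)"
    using hit_prob_eq[of n 0] by (simp add: dfact_ratio_def dfact_def)
  also have "\<dots> = 1 / (2 * real n + 1)"
    by (simp add: field_simps)
  finally show "hit_prob n 0 = 1 / (2 * real n + 1)" .
  show "return_prob x < 1" for x
    by (rule return_prob_less_1)
qed

end
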